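(* Let $n\ge1$, fix $i\in\{1,\dots,n\}$, and let $f,h\in L^2((0,1)^n)$ be real-valued, both not a.e. constant, and set $g=f+h$. If $\mathrm{Cov}(f,h)=(fh)_0-f_0h_0\ge0$, then $$S^g_{T_{x_i}}\le\frac{\Big(\sqrt{S^f_{T_{x_i}}\mathrm{Var}(f)}+\sqrt{S^h_{T_{x_i}}\mathrm{Var}(h)}\Big)^2}{\mathrm{Var}(f)+\mathrm{Var}(h)},$$ and consequently $S^g_{T_{x_i}}\le 2\max\{S^f_{T_{x_i}},S^h_{T_{x_i}}\}$, where the factor $2$ is sharp.
   Context: All integrals are with respect to Lebesgue measure on $(0,1)^n$ (inputs independent, uniform on $[0,1]$). For $\varphi$, $\varphi_0=\int\varphi$ and $\mathrm{Var}(\varphi)=\int\varphi^2-\varphi_0^2$. With $x_{\sim i}=(x_1,\dots,x_{i-1},x_{i+1},\dots,x_n)$, the total Sobol index of $x_i$ for $\varphi$ is $$S^\varphi_{T_{x_i}}=\frac{\int\varphi^2\,dx-\int\big(\int\varphi\,dx_i\big)^2dx_{\sim i}}{\mathrm{Var}(\varphi)}.$$ *)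

theory Defs
  imports "HOL-Probability.Probability"
begin

definition unit_iv :: "real measure" where
  "unit_iv = restrict_space lborel {0<..<1}"

definition cube :: "nat \<Rightarrow> (nat \<Rightarrow> real) measure" where
  "cube n = PiM {1..n} (\<lambda>_. unit_iv)"

definition cube_wo :: "nat \<Rightarrow> nat \<Rightarrow> (nat \<Rightarrow> real) measure" where
  "cube_wo n i = PiM ({1..n} - {i}) (\<lambda>_. unit_iv)"

definition mean0 :: "nat \<Rightarrow> ((nat \<Rightarrow> real) \<Rightarrow> real) \<Rightarrow> real" where
  "mean0 n \<phi> = (\<integral>x. \<phi> x \<partial>cube n)"

definition Var :: "nat \<Rightarrow> ((nat \<Rightarrow> real) \<Rightarrow> real) \<Rightarrow> real" where
  "Var n \<phi> = (\<integral>x. (\<phi> x)\<^sup>2 \<partial>cube n) - (mean0 n \<phi>)\<^sup>2"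

definition Cov :: "nat \<Rightarrow> ((nat \<Rightarrow> real) \<Rightarrow> real) \<Rightarrow> ((nat \<Rightarrow> real) \<Rightarrow> real) \<Rightarrow> real" where
  "Cov n f h = (\<integral>x. f x * h x \<partial>cube n) - mean0 n f * mean0 n h"

definition sobol_total :: "nat \<Rightarrow> nat \<Rightarrow> ((nat \<Rightarrow> real) \<Rightarrow> real) \<Rightarrow> real" where
  "sobol_total n i \<phi> =
     ((\<integral>x. (\<phi> x)\<^sup>2 \<partial>cube n)
      - (\<integral>y. (\<integral>t. \<phi> (y(i := t)) \<partial>unit_iv)\<^sup>2 \<partial>cube_wo n i)) / Var n \<phi>"

definition admissible :: "nat \<Rightarrow> ((nat \<Rightarrow> real) \<Rightarrow> real) \<Rightarrow> bool" where
  "admissible n \<phi> \<longleftrightarrow> \<phi> \<in> borel_measurable (cube n)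
     \<and> integrable (cube n) (\<lambda>x. (\<phi> x)\<^sup>2)
     \<and> \<not> (\<exists>c. AE x in cube n. \<phi> x = c)"

end

theory Submission
  imports Defs
begin

(* The numerator of the total Sobol index of x_i is the expected conditional variance
   E[Var(phi | x_{~i})], the squared L^2 norm of phi minus its average over x_i. This is the
   square of a seminorm, so by Minkowski's inequality its square root is subadditive. Together with
   Var(f + h) = Var f + Var h + 2 Cov(f, h) >= Var f + Var h this gives the bound, and
   (sqrt a + sqrt b)^2 <= 2 (a + b) gives the factor 2. The factor is attained by
   f = x_i + x_j and h = x_i - x_j: they are uncorrelated with total index 1/2 each, while
   f + h = 2 x_i has total index 1. *)

lemma prob_space_unit_iv: "prob_space unit_iv"
  by (rule prob_spaceI) (simp add: unit_iv_def emeasure_restrict_space)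

lemma space_unit_iv: "space unit_iv = {0<..<1}"
  by (simp add: unit_iv_def)

lemma integrable_unit_iv_power: "integrable unit_iv (\<lambda>t. t ^ k)"
proof -
  interpret prob_space unit_iv by (rule prob_space_unit_iv)
  have "AE t in unit_iv. norm (t ^ k) \<le> 1"
    by (rule AE_I2) (simp add: space_unit_iv abs_le_iff power_le_one power_abs[symmetric])
  then show ?thesis
    by (intro integrable_const_bound[where B=1]) (auto simp: unit_iv_def intro!: measurable_restrict_space1)
qed

lemma integral_unit_iv_power: "(\<integral>t. t ^ k \<partial>unit_iv) = 1 / Suc k"
proof -
  have "((\<lambda>t::real. t ^ Suc k / Suc k) has_vector_derivative t ^ k) (at t within A)" for t A
    by (auto intro!: derivative_eq_intros simp del: power_Suc
             simp: has_real_derivative_iff_has_vector_derivative[symmetric])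
  then have "(LBINT t=ereal 0..ereal 1. t ^ k) = (\<lambda>t::real. t ^ Suc k / Suc k) 1 - (\<lambda>t. t ^ Suc k / Suc k) 0"
    by (intro interval_integral_FTC_finite) (auto intro!: continuous_intros)
  then show ?thesis
    by (simp add: unit_iv_def integral_restrict_space interval_integral_Ioo set_lebesgue_integral_def)
qed

lemma le_sqrt_mult_if_quadratic_nonneg:
  fixes A B C :: real
  assumes quadratic: "\<And>s. 0 \<le> A + 2 * s * C + s\<^sup>2 * B" and "0 \<le> A" "0 \<le> B"
  shows "C \<le> sqrt A * sqrt B"
proof (cases "C \<le> 0")
  case True
  moreover have "0 \<le> sqrt A * sqrt B" using assms(2,3) by simp
  ultimately show ?thesis by linarith
next
  case False
  show ?thesis
  proof (cases "B = 0")
    case True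
    have "0 \<le> A + 2 * (- (A + 1) / (2 * C)) * C" using quadratic[of "- (A + 1) / (2 * C)"] True by simp
    with False show ?thesis by (simp add: field_simps)
  next
    case False
    with \<open>0 \<le> B\<close> have "0 < B" by simp
    have "0 \<le> A + 2 * (- C / B) * C + (- C / B)\<^sup>2 * B" by (rule quadratic)
    then have "C\<^sup>2 \<le> A * B" using \<open>0 < B\<close> by (simp add: field_simps power2_eq_square)
    then have "sqrt (C\<^sup>2) \<le> sqrt (A * B)" by (rule real_sqrt_le_mono)
    then show ?thesis by (simp add: real_sqrt_mult)
  qed
qed

lemma integrable_mult_if_square_integrable:
  fixes a b :: "'a \<Rightarrow> real"
  assumes "a \<in> borel_measurable M" "b \<in> borel_measurable M"
    and "integrable M (\<lambda>x. (a x)\<^sup>2)" "integrable M (\<lambda>x. (b x)\<^sup>2)"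
  shows "integrable M (\<lambda>x. a x * b x)"
proof (rule Bochner_Integration.integrable_bound[where f="\<lambda>x. (a x)\<^sup>2 + (b x)\<^sup>2"])
  have "\<bar>a x * b x\<bar> \<le> (a x)\<^sup>2 + (b x)\<^sup>2" for x
    using zero_le_power2[of "\<bar>a x\<bar> - \<bar>b x\<bar>"] zero_le_power2[of "a x"] zero_le_power2[of "b x"]
    unfolding abs_mult power2_diff power2_abs by linarith
  then show "AE x in M. norm (a x * b x) \<le> norm ((a x)\<^sup>2 + (b x)\<^sup>2)" by simp
qed (use assms in simp_all)

lemma integrable_square_add:
  fixes a b :: "'a \<Rightarrow> real"
  assumes "a \<in> borel_measurable M" "b \<in> borel_measurable M"
    and a2: "integrable M (\<lambda>x. (a x)\<^sup>2)" and b2: "integrable M (\<lambda>x. (b x)\<^sup>2)"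
  shows "integrable M (\<lambda>x. (a x + b x)\<^sup>2)"
proof -
  have "(\<lambda>x. (a x + b x)\<^sup>2) = (\<lambda>x. (a x)\<^sup>2 + 2 * (a x * b x) + (b x)\<^sup>2)"
    by (simp add: fun_eq_iff power2_sum)
  then show ?thesis
    using a2 b2 integrable_mult_if_square_integrable[OF assms] by simp
qed

lemma Cauchy_Schwarz_integral:
  fixes a b :: "'a \<Rightarrow> real"
  assumes "a \<in> borel_measurable M" "b \<in> borel_measurable M"
    and a2: "integrable M (\<lambda>x. (a x)\<^sup>2)" and b2: "integrable M (\<lambda>x. (b x)\<^sup>2)"
  shows "(\<integral>x. a x * b x \<partial>M) \<le> sqrt (\<integral>x. (a x)\<^sup>2 \<partial>M) * sqrt (\<integral>x. (b x)\<^sup>2 \<partial>M)"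
proof (rule le_sqrt_mult_if_quadratic_nonneg)
  have ab: "integrable M (\<lambda>x. a x * b x)"
    by (rule integrable_mult_if_square_integrable) fact+
  fix s :: real
  have "(\<lambda>x. (a x + s * b x)\<^sup>2) = (\<lambda>x. (a x)\<^sup>2 + 2 * s * (a x * b x) + s\<^sup>2 * (b x)\<^sup>2)"
    by (simp add: power2_sum power_mult_distrib algebra_simps)
  moreover have "0 \<le> (\<integral>x. (a x + s * b x)\<^sup>2 \<partial>M)" by simp
  ultimately show "0 \<le> (\<integral>x. (a x)\<^sup>2 \<partial>M) + 2 * s * (\<integral>x. a x * b x \<partial>M) + s\<^sup>2 * (\<integral>x. (b x)\<^sup>2 \<partial>M)"
    using a2 b2 ab by simp
qed simp_all

lemma integral_square_add_le:
  fixes a b :: "'a \<Rightarrow> real"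
  assumes "a \<in> borel_measurable M" "b \<in> borel_measurable M"
    and a2: "integrable M (\<lambda>x. (a x)\<^sup>2)" and b2: "integrable M (\<lambda>x. (b x)\<^sup>2)"
  shows "(\<integral>x. (a x + b x)\<^sup>2 \<partial>M) \<le> (sqrt (\<integral>x. (a x)\<^sup>2 \<partial>M) + sqrt (\<integral>x. (b x)\<^sup>2 \<partial>M))\<^sup>2"
proof -
  have ab: "integrable M (\<lambda>x. a x * b x)"
    by (rule integrable_mult_if_square_integrable) fact+
  have "(\<lambda>x. (a x + b x)\<^sup>2) = (\<lambda>x. (a x)\<^sup>2 + 2 * (a x * b x) + (b x)\<^sup>2)"
    by (simp add: fun_eq_iff power2_sum)
  then have "(\<integral>x. (a x + b x)\<^sup>2 \<partial>M)
      = (\<integral>x. (a x)\<^sup>2 \<partial>M) + 2 * (\<integral>x. a x * b x \<partial>M) + (\<integral>x. (b x)\<^sup>2 \<partial>M)"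
    using a2 b2 ab by simp
  also have "\<dots> \<le> (\<integral>x. (a x)\<^sup>2 \<partial>M) + 2 * (sqrt (\<integral>x. (a x)\<^sup>2 \<partial>M) * sqrt (\<integral>x. (b x)\<^sup>2 \<partial>M))
                  + (\<integral>x. (b x)\<^sup>2 \<partial>M)"
    using Cauchy_Schwarz_integral[OF assms] by simp
  also have "\<dots> = (sqrt (\<integral>x. (a x)\<^sup>2 \<partial>M) + sqrt (\<integral>x. (b x)\<^sup>2 \<partial>M))\<^sup>2"
    by (simp add: power2_sum)
  finally show ?thesis .
qed

lemma (in prob_space) variance_eq_0_iff:
  fixes X :: "'a \<Rightarrow> real"
  assumes X: "random_variable borel X" and X2: "integrable M (\<lambda>x. (X x)\<^sup>2)"
  shows "variance X = 0 \<longleftrightarrow> (\<exists>c. AE x in M. X x = c)"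
proof
  have "integrable M X" by (rule square_integrable_imp_integrable[OF X X2])
  then have "integrable M (\<lambda>x. (X x - expectation X)\<^sup>2)"
    using X2 by (simp add: power2_diff)
  moreover assume "variance X = 0"
  ultimately have "AE x in M. (X x - expectation X)\<^sup>2 = 0"
    by (simp add: integral_nonneg_eq_0_iff_AE)
  then show "\<exists>c. AE x in M. X x = c" by (auto elim: eventually_mono)
next
  assume "\<exists>c. AE x in M. X x = c"
  then obtain c where c: "AE x in M. X x = c" ..
  then have "expectation X = c"
    using X by (simp add: integral_cong_AE[of X M "\<lambda>_. c"] prob_space)
  with c X show "variance X = 0"
    by (simp add: integral_cong_AE[of _ M "\<lambda>_. 0"] eventually_mono)
qed

definition fiber_mean :: "'b measure \<Rightarrow> ('a \<times> 'b \<Rightarrow> real) \<Rightarrow> 'a \<Rightarrow> real" where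
  "fiber_mean N \<phi> y = (\<integral>t. \<phi> (y, t) \<partial>N)"

definition expected_fiber_var :: "'a measure \<Rightarrow> 'b measure \<Rightarrow> ('a \<times> 'b \<Rightarrow> real) \<Rightarrow> real" where
  "expected_fiber_var M N \<phi> = (\<integral>p. (\<phi> p - fiber_mean N \<phi> (fst p))\<^sup>2 \<partial>(M \<Otimes>\<^sub>M N))"

lemma expected_fiber_var_nonneg: "0 \<le> expected_fiber_var M N \<phi>"
  unfolding expected_fiber_var_def by simp

context pair_prob_space
begin

lemma AE_comp_fst: "AE y in M1. P y \<Longrightarrow> AE p in M1 \<Otimes>\<^sub>M M2. P (fst p)"
  by (rule AE_distrD[OF measurable_fst]) (simp only: M2.distr_pair_fst)

lemma integrable_comp_fst:
  fixes g :: "'a \<Rightarrow> real"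
  shows "g \<in> borel_measurable M1 \<Longrightarrow> integrable M1 g \<Longrightarrow> integrable (M1 \<Otimes>\<^sub>M M2) (\<lambda>p. g (fst p))"
  using integrable_distr_eq[OF measurable_fst, of g M1 M2] by (simp add: M2.distr_pair_fst)

lemma borel_measurable_fiber_mean:
  "\<phi> \<in> borel_measurable (M1 \<Otimes>\<^sub>M M2) \<Longrightarrow> fiber_mean M2 \<phi> \<in> borel_measurable M1"
  unfolding fiber_mean_def by (rule M2.borel_measurable_lebesgue_integral) simp

context
  fixes \<phi> :: "'a \<times> 'b \<Rightarrow> real"
  assumes measurable: "\<phi> \<in> borel_measurable (M1 \<Otimes>\<^sub>M M2)"
    and square_integrable: "integrable (M1 \<Otimes>\<^sub>M M2) (\<lambda>p. (\<phi> p)\<^sup>2)"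
begin

lemma AE_integrable_fiber: "AE y in M1. integrable M2 (\<lambda>t. \<phi> (y, t))"
  using AE_integrable_fst'[OF P.square_integrable_imp_integrable[OF measurable square_integrable]] .

lemma AE_fiber_variance:
  "AE y in M1. (\<integral>t. (\<phi> (y, t) - fiber_mean M2 \<phi> y)\<^sup>2 \<partial>M2)
                 = (\<integral>t. (\<phi> (y, t))\<^sup>2 \<partial>M2) - (fiber_mean M2 \<phi> y)\<^sup>2"
  using AE_integrable_fiber AE_integrable_fst'[OF square_integrable]
  by eventually_elim (simp add: M2.variance_eq fiber_mean_def)

lemma integrable_fiber_mean_square: "integrable M1 (\<lambda>y. (fiber_mean M2 \<phi> y)\<^sup>2)"
proof (rule Bochner_Integration.integrable_bound)
  show "integrable M1 (\<lambda>y. \<integral>t. (\<phi> (y, t))\<^sup>2 \<partial>M2)"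
    using integrable_fst'[OF square_integrable] by simp
  show "(\<lambda>y. (fiber_mean M2 \<phi> y)\<^sup>2) \<in> borel_measurable M1"
    using borel_measurable_fiber_mean[OF measurable] by simp
  show "AE y in M1. norm ((fiber_mean M2 \<phi> y)\<^sup>2) \<le> norm (\<integral>t. (\<phi> (y, t))\<^sup>2 \<partial>M2)"
    using AE_fiber_variance
  proof eventually_elim
    case (elim y)
    have "0 \<le> (\<integral>t. (\<phi> (y, t) - fiber_mean M2 \<phi> y)\<^sup>2 \<partial>M2)" by simp
    then show ?case using elim by simp
  qed
qed

lemma integrable_fiber_deviation_square:
  "integrable (M1 \<Otimes>\<^sub>M M2) (\<lambda>p. (\<phi> p - fiber_mean M2 \<phi> (fst p))\<^sup>2)"
proof (rule Bochner_Integration.integrable_bound)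
  show "integrable (M1 \<Otimes>\<^sub>M M2) (\<lambda>p. 2 * (\<phi> p)\<^sup>2 + 2 * (fiber_mean M2 \<phi> (fst p))\<^sup>2)"
    using square_integrable integrable_comp_fst[OF _ integrable_fiber_mean_square]
      borel_measurable_fiber_mean[OF measurable] by simp
  show "(\<lambda>p. (\<phi> p - fiber_mean M2 \<phi> (fst p))\<^sup>2) \<in> borel_measurable (M1 \<Otimes>\<^sub>M M2)"
    using measurable borel_measurable_fiber_mean[OF measurable] by simp
  have "(u - v)\<^sup>2 \<le> 2 * u\<^sup>2 + 2 * v\<^sup>2" for u v :: real
    using zero_le_power2[of "u + v"] by (simp add: power2_diff power2_sum)
  then show "AE p in M1 \<Otimes>\<^sub>M M2. norm ((\<phi> p - fiber_mean M2 \<phi> (fst p))\<^sup>2)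
                                  \<le> norm (2 * (\<phi> p)\<^sup>2 + 2 * (fiber_mean M2 \<phi> (fst p))\<^sup>2)"
    by simp
qed

lemma expected_fiber_var_eq:
  "expected_fiber_var M1 M2 \<phi> = (\<integral>p. (\<phi> p)\<^sup>2 \<partial>(M1 \<Otimes>\<^sub>M M2)) - (\<integral>y. (fiber_mean M2 \<phi> y)\<^sup>2 \<partial>M1)"
proof -
  have "expected_fiber_var M1 M2 \<phi> = (\<integral>y. (\<integral>t. (\<phi> (y, t) - fiber_mean M2 \<phi> y)\<^sup>2 \<partial>M2) \<partial>M1)"
    unfolding expected_fiber_var_def using integral_fst'[OF integrable_fiber_deviation_square] by simp
  also have "\<dots> = (\<integral>y. (\<integral>t. (\<phi> (y, t))\<^sup>2 \<partial>M2) - (fiber_mean M2 \<phi> y)\<^sup>2 \<partial>M1)"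
    using AE_fiber_variance measurable borel_measurable_fiber_mean[OF measurable]
    by (intro integral_cong_AE) auto
  also have "\<dots> = (\<integral>p. (\<phi> p)\<^sup>2 \<partial>(M1 \<Otimes>\<^sub>M M2)) - (\<integral>y. (fiber_mean M2 \<phi> y)\<^sup>2 \<partial>M1)"
    using integrable_fst'[OF square_integrable] integral_fst'[OF square_integrable]
      integrable_fiber_mean_square by simp
  finally show ?thesis .
qed

end

lemma sqrt_expected_fiber_var_add_le:
  assumes "\<phi> \<in> borel_measurable (M1 \<Otimes>\<^sub>M M2)" "integrable (M1 \<Otimes>\<^sub>M M2) (\<lambda>p. (\<phi> p)\<^sup>2)"
    and "\<psi> \<in> borel_measurable (M1 \<Otimes>\<^sub>M M2)" "integrable (M1 \<Otimes>\<^sub>M M2) (\<lambda>p. (\<psi> p)\<^sup>2)"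
  shows "sqrt (expected_fiber_var M1 M2 (\<lambda>p. \<phi> p + \<psi> p))
           \<le> sqrt (expected_fiber_var M1 M2 \<phi>) + sqrt (expected_fiber_var M1 M2 \<psi>)"
proof -
  let ?dev = "\<lambda>\<theta> p. \<theta> p - fiber_mean M2 \<theta> (fst p)"
  have "AE y in M1. fiber_mean M2 (\<lambda>p. \<phi> p + \<psi> p) y = fiber_mean M2 \<phi> y + fiber_mean M2 \<psi> y"
    using AE_integrable_fiber[OF assms(1,2)] AE_integrable_fiber[OF assms(3,4)]
    by eventually_elim (simp add: fiber_mean_def)
  then have dev_add: "AE p in M1 \<Otimes>\<^sub>M M2. (?dev (\<lambda>p. \<phi> p + \<psi> p) p)\<^sup>2 = (?dev \<phi> p + ?dev \<psi> p)\<^sup>2"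
    by (rule AE_comp_fst[THEN eventually_mono]) (simp add: algebra_simps)
  have "expected_fiber_var M1 M2 (\<lambda>p. \<phi> p + \<psi> p) = (\<integral>p. (?dev \<phi> p + ?dev \<psi> p)\<^sup>2 \<partial>(M1 \<Otimes>\<^sub>M M2))"
    unfolding expected_fiber_var_def
    using assms borel_measurable_fiber_mean[of \<phi>] borel_measurable_fiber_mean[of \<psi>]
      borel_measurable_fiber_mean[of "\<lambda>p. \<phi> p + \<psi> p"]
    by (intro integral_cong_AE[OF _ _ dev_add]) simp_all
  also have "\<dots> \<le> (sqrt (expected_fiber_var M1 M2 \<phi>) + sqrt (expected_fiber_var M1 M2 \<psi>))\<^sup>2"
    unfolding expected_fiber_var_def
    using assms borel_measurable_fiber_mean[of \<phi>] borel_measurable_fiber_mean[of \<psi>]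
      integrable_fiber_deviation_square[OF assms(1,2)] integrable_fiber_deviation_square[OF assms(3,4)]
    by (intro integral_square_add_le[where a="?dev \<phi>" and b="?dev \<psi>"]) simp_all
  finally have "expected_fiber_var M1 M2 (\<lambda>p. \<phi> p + \<psi> p)
      \<le> (sqrt (expected_fiber_var M1 M2 \<phi>) + sqrt (expected_fiber_var M1 M2 \<psi>))\<^sup>2" .
  then show ?thesis by (intro real_le_lsqrt) (simp_all add: expected_fiber_var_nonneg)
qed

end

lemma (in product_sigma_finite) distr_PiM_fun_upd:
  assumes fin: "finite I" and i: "i \<notin> I"
  shows "distr (Pi\<^sub>M I M \<Otimes>\<^sub>M M i) (Pi\<^sub>M (insert i I) M) (\<lambda>(x, t). x(i := t)) = Pi\<^sub>M (insert i I) M"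
proof (rule PiM_eqI)
  interpret I: finite_product_sigma_finite M I by standard fact
  fix A assume A: "\<And>j. j \<in> insert i I \<Longrightarrow> A j \<in> sets (M j)"
  have "(\<lambda>(x, t). x(i := t)) -` Pi\<^sub>E (insert i I) A \<inter> space (Pi\<^sub>M I M \<Otimes>\<^sub>M M i) = Pi\<^sub>E I A \<times> A i"
    using A[THEN sets.sets_into_space] i
    by (auto simp: space_PiM space_pair_measure PiE_def Pi_def extensional_def split: if_splits)
  moreover have "Pi\<^sub>E I A \<in> sets (Pi\<^sub>M I M)"
    using A by (auto intro!: sets_PiM_I_finite fin)
  ultimately show "emeasure (distr (Pi\<^sub>M I M \<Otimes>\<^sub>M M i) (Pi\<^sub>M (insert i I) M) (\<lambda>(x, t). x(i := t)))
      (Pi\<^sub>E (insert i I) A) = (\<Prod>j\<in>insert i I. emeasure (M j) (A j))"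
    using A fin i
    by (subst emeasure_distr)
       (auto simp: I.measure_times mult.commute
             sigma_finite_measure.emeasure_pair_measure_Times[OF sigma_finite_measures])
qed (use fin in simp_all)

context
  fixes M :: "'a measure" and I :: "'i set"
  assumes M: "prob_space M"
begin

lemma integral_PiM_component:
  fixes p :: "'a \<Rightarrow> real"
  assumes "k \<in> I" "p \<in> borel_measurable M"
  shows "(\<integral>x. p (x k) \<partial>Pi\<^sub>M I (\<lambda>_. M)) = (\<integral>t. p t \<partial>M)"
  using integral_distr[OF measurable_component_singleton[OF assms(1)] assms(2)]
  by (simp add: distr_PiM_component[of I "\<lambda>_. M" k] M assms(1))

lemma integrable_PiM_component:
  fixes p :: "'a \<Rightarrow> real"
  assumes "k \<in> I" "integrable M p"
  shows "integrable (Pi\<^sub>M I (\<lambda>_. M)) (\<lambda>x. p (x k))"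
  using integrable_distr[OF measurable_component_singleton[OF assms(1)], of "\<lambda>_. M" p]
  by (simp add: distr_PiM_component[of I "\<lambda>_. M" k] M assms)

lemma integral_PiM_two_components:
  fixes p q :: "'a \<Rightarrow> real"
  assumes I: "finite I" "k \<in> I" "l \<in> I" "k \<noteq> l" and p: "integrable M p" and q: "integrable M q"
  shows "integrable (Pi\<^sub>M I (\<lambda>_. M)) (\<lambda>x. p (x k) * q (x l))"
    and "(\<integral>x. p (x k) * q (x l) \<partial>Pi\<^sub>M I (\<lambda>_. M)) = (\<integral>t. p t \<partial>M) * (\<integral>t. q t \<partial>M)"
proof -
  interpret M: prob_space M by (rule M)
  interpret product_sigma_finite "\<lambda>_. M"
    by (simp add: product_sigma_finite_def M prob_space_imp_sigma_finite)
  define F where "F j = (if j = k then p else if j = l then q else (\<lambda>_. 1))" for j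
  have F: "integrable M (F j)" for j
    using p q by (simp add: F_def)
  have "(\<Prod>j\<in>I. F j (x j)) = p (x k) * q (x l)" for x
  proof -
    have "(\<Prod>j\<in>I. F j (x j)) = (\<Prod>j\<in>I. (if j = k then p (x k) else 1) * (if j = l then q (x l) else 1))"
      using I by (intro prod.cong) (auto simp: F_def)
    then show ?thesis using I by (simp add: prod.distrib)
  qed
  moreover have "(\<Prod>j\<in>I. integral\<^sup>L M (F j)) = (\<integral>t. p t \<partial>M) * (\<integral>t. q t \<partial>M)"
  proof -
    have "(\<Prod>j\<in>I. integral\<^sup>L M (F j))
        = (\<Prod>j\<in>I. (if j = k then integral\<^sup>L M p else 1) * (if j = l then integral\<^sup>L M q else 1))"
      using I by (intro prod.cong) (auto simp: F_def M.prob_space)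
    then show ?thesis using I by (simp add: prod.distrib)
  qed
  ultimately show "integrable (Pi\<^sub>M I (\<lambda>_. M)) (\<lambda>x. p (x k) * q (x l))"
    and "(\<integral>x. p (x k) * q (x l) \<partial>Pi\<^sub>M I (\<lambda>_. M)) = (\<integral>t. p t \<partial>M) * (\<integral>t. q t \<partial>M)"
    using product_integrable_prod[OF I(1), where f=F] product_integral_prod[OF I(1), where f=F] F
    by simp_all
qed

end

interpretation unit_iv_product: product_sigma_finite "\<lambda>_::nat. unit_iv"
  by (simp add: product_sigma_finite_def prob_space_unit_iv prob_space_imp_sigma_finite)

lemma prob_space_cube: "prob_space (cube n)"
  unfolding cube_def by (rule prob_space_PiM) (rule prob_space_unit_iv)

lemma prob_space_cube_wo: "prob_space (cube_wo n i)"
  unfolding cube_wo_def by (rule prob_space_PiM) (rule prob_space_unit_iv)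

lemma pair_prob_space_cube_wo_unit_iv: "pair_prob_space (cube_wo n i) unit_iv"
  by (simp add: pair_prob_space_def pair_sigma_finite_def prob_space_imp_sigma_finite
      prob_space_unit_iv prob_space_cube_wo)

context
  fixes n i :: nat
  assumes i: "i \<in> {1..n}"
begin

lemma cube_insert: "cube n = Pi\<^sub>M (insert i ({1..n} - {i})) (\<lambda>_. unit_iv)"
  using i unfolding cube_def by (simp add: insert_absorb)

lemma measurable_cube_fun_upd: "(\<lambda>(y, t). y(i := t)) \<in> cube_wo n i \<Otimes>\<^sub>M unit_iv \<rightarrow>\<^sub>M cube n"
  unfolding cube_insert cube_wo_def by (rule measurable_add_dim)

lemma distr_cube_fun_upd: "distr (cube_wo n i \<Otimes>\<^sub>M unit_iv) (cube n) (\<lambda>(y, t). y(i := t)) = cube n"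
  unfolding cube_insert cube_wo_def by (rule unit_iv_product.distr_PiM_fun_upd) auto

lemma integrable_cube_fun_upd:
  fixes \<phi> :: "(nat \<Rightarrow> real) \<Rightarrow> real"
  shows "integrable (cube n) \<phi> \<Longrightarrow> integrable (cube_wo n i \<Otimes>\<^sub>M unit_iv) (\<lambda>(y, t). \<phi> (y(i := t)))"
  using integrable_distr[OF measurable_cube_fun_upd, where f=\<phi>, unfolded distr_cube_fun_upd]
  by (simp add: case_prod_beta')

context
  fixes \<phi> :: "(nat \<Rightarrow> real) \<Rightarrow> real"
  assumes measurable: "\<phi> \<in> borel_measurable (cube n)"
begin

lemma borel_measurable_cube_fun_upd:
  "(\<lambda>(y, t). \<phi> (y(i := t))) \<in> borel_measurable (cube_wo n i \<Otimes>\<^sub>M unit_iv)"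
  using measurable_comp[OF measurable_cube_fun_upd measurable] by (simp add: comp_def case_prod_beta')

lemma integral_cube_fun_upd:
  "(\<integral>p. (\<lambda>(y, t). \<phi> (y(i := t))) p \<partial>(cube_wo n i \<Otimes>\<^sub>M unit_iv)) = (\<integral>x. \<phi> x \<partial>cube n)"
  using integral_distr[OF measurable_cube_fun_upd measurable, unfolded distr_cube_fun_upd]
  by (simp add: case_prod_beta')

end

lemma sobol_total_eq_expected_fiber_var:
  assumes "\<phi> \<in> borel_measurable (cube n)" "integrable (cube n) (\<lambda>x. (\<phi> x)\<^sup>2)"
  shows "sobol_total n i \<phi> = expected_fiber_var (cube_wo n i) unit_iv (\<lambda>(y, t). \<phi> (y(i := t))) / Var n \<phi>"
proof -
  interpret pair_prob_space "cube_wo n i" unit_iv by (rule pair_prob_space_cube_wo_unit_iv)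
  have "integrable (cube_wo n i \<Otimes>\<^sub>M unit_iv) (\<lambda>p. ((\<lambda>(y, t). \<phi> (y(i := t))) p)\<^sup>2)"
    using integrable_cube_fun_upd[of "\<lambda>x. (\<phi> x)\<^sup>2"] assms by (simp add: case_prod_beta')
  then show ?thesis
    using expected_fiber_var_eq[OF borel_measurable_cube_fun_upd[OF assms(1)]]
      integral_cube_fun_upd[of "\<lambda>x. (\<phi> x)\<^sup>2"] assms
    by (simp add: sobol_total_def fiber_mean_def case_prod_beta')
qed

end

lemma admissible_iff_Var_pos:
  "admissible n \<phi> \<longleftrightarrow>
     \<phi> \<in> borel_measurable (cube n) \<and> integrable (cube n) (\<lambda>x. (\<phi> x)\<^sup>2) \<and> 0 < Var n \<phi>"
proof (cases "\<phi> \<in> borel_measurable (cube n) \<and> integrable (cube n) (\<lambda>x. (\<phi> x)\<^sup>2)")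
  case True
  interpret prob_space "cube n" by (rule prob_space_cube)
  have "integrable (cube n) \<phi>" using True square_integrable_imp_integrable by blast
  then have "Var n \<phi> = variance \<phi>" using True by (simp add: Var_def mean0_def variance_eq)
  then show ?thesis
    using True variance_eq_0_iff[of \<phi>] variance_positive[of \<phi>]
    by (auto simp: admissible_def less_le)
qed (auto simp: admissible_def)

lemma Var_add:
  fixes f h :: "(nat \<Rightarrow> real) \<Rightarrow> real"
  assumes "f \<in> borel_measurable (cube n)" and f2: "integrable (cube n) (\<lambda>x. (f x)\<^sup>2)"
    and "h \<in> borel_measurable (cube n)" and h2: "integrable (cube n) (\<lambda>x. (h x)\<^sup>2)"
  shows "Var n (\<lambda>x. f x + h x) = Var n f + Var n h + 2 * Cov n f h"
proof -
  interpret prob_space "cube n" by (rule prob_space_cube)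
  have "integrable (cube n) f" "integrable (cube n) h"
    using assms square_integrable_imp_integrable by blast+
  moreover have "integrable (cube n) (\<lambda>x. f x * h x)"
    by (rule integrable_mult_if_square_integrable) fact+
  moreover have "(\<lambda>x. (f x + h x)\<^sup>2) = (\<lambda>x. (f x)\<^sup>2 + 2 * (f x * h x) + (h x)\<^sup>2)"
    by (simp add: fun_eq_iff power2_sum)
  ultimately show ?thesis
    using f2 h2 by (simp add: Var_def Cov_def mean0_def power2_sum)
qed

lemma sum_sqrt_mult_square_div_le:
  fixes a b u v :: real
  assumes "0 \<le> a" "0 \<le> b" "0 < u" "0 < v"
  shows "(sqrt (a * u) + sqrt (b * v))\<^sup>2 / (u + v) \<le> 2 * max a b"
proof -
  have "(sqrt (a * u))\<^sup>2 = a * u" "(sqrt (b * v))\<^sup>2 = b * v"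
    using assms by simp_all
  then have "(sqrt (a * u) + sqrt (b * v))\<^sup>2 \<le> 2 * (a * u + b * v)"
    using zero_le_power2[of "sqrt (a * u) - sqrt (b * v)"]
    unfolding power2_sum power2_diff distrib_left by linarith
  also have "\<dots> \<le> 2 * (max a b * u + max a b * v)"
    using assms by (intro mult_left_mono add_mono mult_right_mono) auto
  finally show ?thesis
    using assms by (simp add: pos_divide_le_eq algebra_simps)
qed

context
  fixes n i :: nat
  assumes i: "i \<in> {1..n}"
begin

lemma sobol_total_mult_Var:
  assumes "admissible n \<phi>"
  shows "sobol_total n i \<phi> * Var n \<phi> = expected_fiber_var (cube_wo n i) unit_iv (\<lambda>(y, t). \<phi> (y(i := t)))"
  using assms sobol_total_eq_expected_fiber_var[OF i] by (simp add: admissible_iff_Var_pos)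

lemma sobol_total_nonneg: "admissible n \<phi> \<Longrightarrow> 0 \<le> sobol_total n i \<phi>"
  using sobol_total_eq_expected_fiber_var[OF i]
  by (simp add: admissible_iff_Var_pos expected_fiber_var_nonneg divide_nonneg_pos)

lemma sobol_total_add_le:
  fixes f h :: "(nat \<Rightarrow> real) \<Rightarrow> real"
  assumes f: "admissible n f" and h: "admissible n h" and "0 \<le> Cov n f h"
  shows "sobol_total n i (\<lambda>x. f x + h x)
           \<le> (sqrt (sobol_total n i f * Var n f) + sqrt (sobol_total n i h * Var n h))\<^sup>2
              / (Var n f + Var n h)"
proof -
  interpret pair_prob_space "cube_wo n i" unit_iv by (rule pair_prob_space_cube_wo_unit_iv)
  let ?D = "\<lambda>\<phi>. expected_fiber_var (cube_wo n i) unit_iv (\<lambda>(y, t). \<phi> (y(i := t)))"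
  have fm: "f \<in> borel_measurable (cube n)" and f2: "integrable (cube n) (\<lambda>x. (f x)\<^sup>2)"
    and hm: "h \<in> borel_measurable (cube n)" and h2: "integrable (cube n) (\<lambda>x. (h x)\<^sup>2)"
    and "0 < Var n f" "0 < Var n h"
    using f h by (auto simp: admissible_iff_Var_pos)
  have g2: "integrable (cube n) (\<lambda>x. (f x + h x)\<^sup>2)"
    by (rule integrable_square_add[OF fm hm f2 h2])
  have "sqrt (?D (\<lambda>x. f x + h x)) \<le> sqrt (?D f) + sqrt (?D h)"
    using sqrt_expected_fiber_var_add_le[OF borel_measurable_cube_fun_upd[OF i fm] _
        borel_measurable_cube_fun_upd[OF i hm]]
      integrable_cube_fun_upd[OF i f2] integrable_cube_fun_upd[OF i h2]
    by (simp add: case_prod_beta')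
  then have "?D (\<lambda>x. f x + h x) \<le> (sqrt (?D f) + sqrt (?D h))\<^sup>2"
    by (rule sqrt_le_D)
  moreover have "Var n f + Var n h \<le> Var n (\<lambda>x. f x + h x)"
    using Var_add[OF fm f2 hm h2] \<open>0 \<le> Cov n f h\<close> by simp
  ultimately have "?D (\<lambda>x. f x + h x) / Var n (\<lambda>x. f x + h x)
                     \<le> (sqrt (?D f) + sqrt (?D h))\<^sup>2 / (Var n f + Var n h)"
    using \<open>0 < Var n f\<close> \<open>0 < Var n h\<close> expected_fiber_var_nonneg
    by (intro frac_le) auto
  then show ?thesis
    using sobol_total_eq_expected_fiber_var[OF i] fm hm g2
      sobol_total_mult_Var[OF f] sobol_total_mult_Var[OF h] by simp
qed

end

lemma unit_cube_power_moment:
  assumes "k \<in> I"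
  shows "integrable (Pi\<^sub>M I (\<lambda>_. unit_iv)) (\<lambda>x. x k ^ m)"
    and "(\<integral>x. x k ^ m \<partial>Pi\<^sub>M I (\<lambda>_. unit_iv)) = 1 / Suc m"
  using integrable_PiM_component[OF prob_space_unit_iv assms integrable_unit_iv_power]
    integral_PiM_component[OF prob_space_unit_iv assms
      borel_measurable_integrable[OF integrable_unit_iv_power]]
  by (simp_all add: integral_unit_iv_power)

lemma unit_cube_mixed_moment:
  assumes "finite I" "k \<in> I" "l \<in> I" "k \<noteq> l"
  shows "integrable (Pi\<^sub>M I (\<lambda>_. unit_iv)) (\<lambda>x. x k * x l)"
    and "(\<integral>x. x k * x l \<partial>Pi\<^sub>M I (\<lambda>_. unit_iv)) = 1 / 4"
  using integral_PiM_two_components[OF prob_space_unit_iv assms, of "\<lambda>t. t ^ 1" "\<lambda>t. t ^ 1"]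
  by (simp_all only: integrable_unit_iv_power integral_unit_iv_power) simp_all

lemma cube_coordinate_moments:
  assumes "k \<in> {1..n}"
  shows "integrable (cube n) (\<lambda>x. x k)" "(\<integral>x. x k \<partial>cube n) = 1 / 2"
    and "integrable (cube n) (\<lambda>x. (x k)\<^sup>2)" "(\<integral>x. (x k)\<^sup>2 \<partial>cube n) = 1 / 3"
  using unit_cube_power_moment[OF assms, where m=1] unit_cube_power_moment[OF assms, where m=2]
  by (simp_all add: cube_def)

context
  fixes n i j :: nat
  assumes i: "i \<in> {1..n}" and j: "j \<in> {1..n}" and "i \<noteq> j"
begin

lemma cube_linear_mult_moment:
  fixes a b c d :: real
  shows "integrable (cube n) (\<lambda>x. (a * x i + b * x j) * (c * x i + d * x j))"
    and "(\<integral>x. (a * x i + b * x j) * (c * x i + d * x j) \<partial>cube n)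
           = a * c / 3 + (a * d + b * c) / 4 + b * d / 3"
proof -
  have eq: "(\<lambda>x. (a * x i + b * x j) * (c * x i + d * x j))
      = (\<lambda>x. a * c * (x i)\<^sup>2 + (a * d + b * c) * (x i * x j) + b * d * (x j)\<^sup>2)"
    by (simp add: fun_eq_iff power2_eq_square algebra_simps)
  note moments = cube_coordinate_moments[OF i] cube_coordinate_moments[OF j]
    unit_cube_mixed_moment[OF _ i j \<open>i \<noteq> j\<close>, folded cube_def]
  show "integrable (cube n) (\<lambda>x. (a * x i + b * x j) * (c * x i + d * x j))"
    unfolding eq using moments by simp
  show "(\<integral>x. (a * x i + b * x j) * (c * x i + d * x j) \<partial>cube n)
           = a * c / 3 + (a * d + b * c) / 4 + b * d / 3"
    unfolding eq by (simp add: moments)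
qed

lemma mean0_cube_linear: "mean0 n (\<lambda>x. a * x i + b * x j) = (a + b) / 2"
  unfolding mean0_def by (simp add: cube_coordinate_moments[OF i] cube_coordinate_moments[OF j])

lemma Cov_cube_linear:
  "Cov n (\<lambda>x. a * x i + b * x j) (\<lambda>x. c * x i + d * x j) = (a * c + b * d) / 12"
  unfolding Cov_def cube_linear_mult_moment(2) mean0_cube_linear by (simp add: field_simps)

lemma Var_cube_linear: "Var n (\<lambda>x. a * x i + b * x j) = (a\<^sup>2 + b\<^sup>2) / 12"
  using Cov_cube_linear[of a b a b] by (simp add: Var_def Cov_def power2_eq_square)

lemma admissible_cube_linear:
  assumes "a \<noteq> 0 \<or> b \<noteq> 0"
  shows "admissible n (\<lambda>x. a * x i + b * x j)"
proof -
  have "(\<lambda>x. (a * x i + b * x j)\<^sup>2) = (\<lambda>x. (a * x i + b * x j) * (a * x i + b * x j))"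
    by (simp add: power2_eq_square)
  moreover have "(\<lambda>x. x i) \<in> borel_measurable (cube n)" "(\<lambda>x. x j) \<in> borel_measurable (cube n)"
    using cube_coordinate_moments(1)[OF i] cube_coordinate_moments(1)[OF j] by simp_all
  moreover have "0 < a\<^sup>2 + b\<^sup>2" using assms by (simp add: sum_power2_gt_zero_iff)
  ultimately show ?thesis
    by (simp add: admissible_iff_Var_pos Var_cube_linear cube_linear_mult_moment)
qed

lemma sobol_total_cube_linear: "sobol_total n i (\<lambda>x. a * x i + b * x j) = a\<^sup>2 / (a\<^sup>2 + b\<^sup>2)"
proof -
  interpret unit_iv: prob_space unit_iv by (rule prob_space_unit_iv)
  interpret cube_wo: prob_space "cube_wo n i" by (rule prob_space_cube_wo)
  have j': "j \<in> {1..n} - {i}" using j \<open>i \<noteq> j\<close> by simp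
  note moments = unit_cube_power_moment[OF j', where m=1, unfolded power_one_right, folded cube_wo_def]
    unit_cube_power_moment[OF j', where m=2, folded cube_wo_def]
  have square: "(\<integral>x. (a * x i + b * x j)\<^sup>2 \<partial>cube n) = a\<^sup>2 / 3 + a * b / 2 + b\<^sup>2 / 3"
    using cube_linear_mult_moment(2)[of a b a b] by (simp add: power2_eq_square)
  have fiber: "(\<integral>t. a * (y(i := t)) i + b * (y(i := t)) j \<partial>unit_iv) = a / 2 + b * y j" for y
    using \<open>i \<noteq> j\<close> integrable_unit_iv_power[where k=1] integral_unit_iv_power[where k=1]
    by (simp add: unit_iv.prob_space)
  have "(\<lambda>y. (a / 2 + b * y j)\<^sup>2) = (\<lambda>y. a\<^sup>2 / 4 + a * b * y j + b\<^sup>2 * y j ^ 2)"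
    by (simp add: fun_eq_iff power2_eq_square algebra_simps)
  then have fiber_square: "(\<integral>y. (a / 2 + b * y j)\<^sup>2 \<partial>cube_wo n i) = a\<^sup>2 / 4 + a * b / 2 + b\<^sup>2 / 3"
    using moments(1,3) by (simp add: moments(2,4) cube_wo.prob_space)
  show ?thesis
    unfolding sobol_total_def fiber square fiber_square Var_cube_linear by simp
qed

end

lemma sobol_total_add_sharp:
  assumes i: "i \<in> {1..n}" and "2 \<le> n" and "c < 2"
  shows "\<exists>f h. admissible n f \<and> admissible n h \<and> Cov n f h \<ge> 0 \<and>
           sobol_total n i (\<lambda>x. f x + h x) > c * max (sobol_total n i f) (sobol_total n i h)"
proof -
  define j where "j = (if i = 1 then 2 else 1 :: nat)"
  have j: "j \<in> {1..n}" and "i \<noteq> j"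
    using i \<open>2 \<le> n\<close> by (auto simp: j_def)
  note linear = admissible_cube_linear[OF i j \<open>i \<noteq> j\<close>] Cov_cube_linear[OF i j \<open>i \<noteq> j\<close>]
    sobol_total_cube_linear[OF i j \<open>i \<noteq> j\<close>]
  let ?f = "\<lambda>x::nat \<Rightarrow> real. x i + x j" and ?h = "\<lambda>x::nat \<Rightarrow> real. x i - x j"
  have "(\<lambda>x. ?f x + ?h x) = (\<lambda>x. 2 * x i + 0 * x j)"
    by (simp add: fun_eq_iff)
  then have sum: "sobol_total n i (\<lambda>x. ?f x + ?h x) = 1"
    using linear(3)[of 2 0] by simp
  have f: "sobol_total n i ?f = 1 / 2" "admissible n ?f"
    using linear(3)[of 1 1] linear(1)[of 1 1] by simp_all
  have h: "sobol_total n i ?h = 1 / 2" "admissible n ?h"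
    using linear(3)[of 1 "- 1"] linear(1)[of 1 "- 1"] by simp_all
  have "Cov n ?f ?h = 0"
    using linear(2)[of 1 1 1 "- 1"] by simp
  then have "admissible n ?f \<and> admissible n ?h \<and> Cov n ?f ?h \<ge> 0 \<and>
      sobol_total n i (\<lambda>x. ?f x + ?h x) > c * max (sobol_total n i ?f) (sobol_total n i ?h)"
    using \<open>c < 2\<close> by (simp only: sum f h) simp
  then show ?thesis by blast
qed

theorem theoremB2:
  fixes n i :: nat
  assumes "1 \<le> n" and "i \<in> {1..n}"
  shows "(\<forall>f h. admissible n f \<and> admissible n h \<and> Cov n f h \<ge> 0 \<longrightarrow>
            sobol_total n i (\<lambda>x. f x + h x)
              \<le> (sqrt (sobol_total n i f * Var n f) + sqrt (sobol_total n i h * Var n h))\<^sup>2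
                 / (Var n f + Var n h)
          \<and> sobol_total n i (\<lambda>x. f x + h x)
              \<le> 2 * max (sobol_total n i f) (sobol_total n i h))
       \<and> (2 \<le> n \<longrightarrow> (\<forall>c<2. \<exists>f h. admissible n f \<and> admissible n h \<and> Cov n f h \<ge> 0 \<and>
            sobol_total n i (\<lambda>x. f x + h x) > c * max (sobol_total n i f) (sobol_total n i h)))"
proof -
  have "sobol_total n i (\<lambda>x. f x + h x)
          \<le> (sqrt (sobol_total n i f * Var n f) + sqrt (sobol_total n i h * Var n h))\<^sup>2
             / (Var n f + Var n h)
        \<and> sobol_total n i (\<lambda>x. f x + h x) \<le> 2 * max (sobol_total n i f) (sobol_total n i h)"
    if f: "admissible n f" and h: "admissible n h" and "0 \<le> Cov n f h" for f h
  proof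
    show bound: "sobol_total n i (\<lambda>x. f x + h x)
        \<le> (sqrt (sobol_total n i f * Var n f) + sqrt (sobol_total n i h * Var n h))\<^sup>2
           / (Var n f + Var n h)"
      by (rule sobol_total_add_le[OF assms(2) f h \<open>0 \<le> Cov n f h\<close>])
    also have "\<dots> \<le> 2 * max (sobol_total n i f) (sobol_total n i h)"
      using f h by (intro sum_sqrt_mult_square_div_le sobol_total_nonneg[OF assms(2)])
        (simp_all add: admissible_iff_Var_pos)
    finally show "sobol_total n i (\<lambda>x. f x + h x) \<le> 2 * max (sobol_total n i f) (sobol_total n i h)" .
  qed
  moreover have "\<exists>f h. admissible n f \<and> admissible n h \<and> Cov n f h \<ge> 0 \<and>
      sobol_total n i (\<lambda>x. f x + h x) > c * max (sobol_total n i f) (sobol_total n i h)"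
    if "2 \<le> n" "c < 2" for c
    by (rule sobol_total_add_sharp[OF assms(2) that])
  ultimately show ?thesis by blast
qed

end
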